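(* Let $L_1,L_2\in\mathcal{L}_{\mathrm{irr}}$ be irreducible subspaces of an arrangement $\mathcal{H}\subset\mathbb{CP}^n$ such that $L=L_1\cap L_2$ is non-empty and reducible. Then the irreducible components of $L$ are exactly $L_1$ and $L_2$; in particular $L_1+L_2=\mathbb{CP}^n$.
   Context: $\mathcal{H}$ is a finite set of distinct hyperplanes in $\mathbb{CP}^n$; $\mathcal{L}$ the set of non-empty proper intersections of members; $\mathcal{H}_L=\{H\in\mathcal{H}:L\subset H\}$. A splitting of an arrangement $\mathcal{K}$ is a decomposition $\mathcal{K}=\mathcal{K}_1\cup\mathcal{K}_2$ whose centres (intersections of members; $\mathbb{CP}^n$ for the empty collection) $T_1,T_2$ satisfy $T_1+T_2=\mathbb{CP}^n$ (projective span); non-trivial if both parts are non-empty; $\mathcal{K}$ is irreducible if no non-trivial splitting exists. $L\in\mathcal{L}$ is irreducible if $\mathcal{H}_L$ is irreducible, reducible otherwise; $\mathcal{L}_{\mathrm{irr}}$ is the set of irreducible elements. The irreducible components of $L\in\mathcal{L}$ are the inclusion-minimal elements of $\mathcal{L}_{\mathrm{irr}}$ containing $L$. *)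

theory Defs
  imports "HOL-Analysis.Analysis"
begin

text \<open>Model: CP^n is the projectivisation of V = complex^'n with CARD('n) = n+1.
Projective subspaces of CP^n correspond to complex-linear subspaces of V
(empty projective subspace = {0}, CP^n = UNIV).  Intersections correspond to
intersections, projective span T1 + T2 corresponds to the linear span of T1 \<union> T2.\<close>

type_synonym 'n cvec = "complex ^ 'n"

definition proj_hyperplane :: "'n::finite cvec set \<Rightarrow> bool" where
  "proj_hyperplane H \<longleftrightarrow> vec.subspace H \<and> vec.dim H = CARD('n) - 1"

definition centre :: "'n::finite cvec set set \<Rightarrow> 'n cvec set" where
  "centre K = \<Inter>K"

definition is_splitting :: "'n::finite cvec set set \<Rightarrow> 'n cvec set set \<Rightarrow> 'n cvec set set \<Rightarrow> bool" where
  "is_splitting K K1 K2 \<longleftrightarrow> K = K1 \<union> K2 \<and> vec.span (centre K1 \<union> centre K2) = UNIV"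

definition arr_irreducible :: "'n::finite cvec set set \<Rightarrow> bool" where
  "arr_irreducible K \<longleftrightarrow> \<not> (\<exists>K1 K2. K1 \<noteq> {} \<and> K2 \<noteq> {} \<and> is_splitting K K1 K2)"

definition intersections :: "'n::finite cvec set set \<Rightarrow> 'n cvec set set" where
  "intersections \<H> = {L. \<exists>S. S \<subseteq> \<H> \<and> S \<noteq> {} \<and> L = \<Inter>S \<and> L \<noteq> {0} \<and> L \<noteq> UNIV}"

definition hyps_containing :: "'n::finite cvec set set \<Rightarrow> 'n cvec set \<Rightarrow> 'n cvec set set" where
  "hyps_containing \<H> L = {H \<in> \<H>. L \<subseteq> H}"

definition irr_intersections :: "'n::finite cvec set set \<Rightarrow> 'n cvec set set" where
  "irr_intersections \<H> = {L \<in> intersections \<H>. arr_irreducible (hyps_containing \<H> L)}"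

definition irr_components :: "'n::finite cvec set set \<Rightarrow> 'n cvec set \<Rightarrow> 'n cvec set set" where
  "irr_components \<H> L = {M \<in> irr_intersections \<H>. L \<subseteq> M \<and>
      \<not> (\<exists>M' \<in> irr_intersections \<H>. L \<subseteq> M' \<and> M' \<subset> M)}"

end

theory Submission
  imports Defs
begin

text \<open>Write \<open>L = L\<^sub>1 \<inter> L\<^sub>2\<close> and let \<open>\<H>\<^sub>L = K\<^sub>1 \<union> K\<^sub>2\<close> be a non-trivial splitting
with centres \<open>T\<^sub>1, T\<^sub>2\<close>, so \<open>T\<^sub>1 + T\<^sub>2\<close> is the whole space.  An irreducible \<open>M \<supseteq> L\<close> has
\<open>\<H>\<^sub>M \<subseteq> \<H>\<^sub>L\<close>, and irreducibility forces \<open>\<H>\<^sub>M\<close> into one part, i.e. \<open>T\<^sub>1 \<subseteq> M\<close> or \<open>T\<^sub>2 \<subseteq> M\<close>.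
Applied to \<open>L\<^sub>1\<close> and \<open>L\<^sub>2\<close>, which cannot both contain the same centre
(else that centre lies in \<open>L\<close>, hence in the other centre, which then has to be everything),
this gives after renaming \<open>T\<^sub>1 \<subseteq> L\<^sub>1\<close>, \<open>T\<^sub>2 \<subseteq> L\<^sub>2\<close>.  The modular law with
\<open>L\<^sub>1 \<inter> T\<^sub>2 \<subseteq> L \<subseteq> T\<^sub>1\<close> yields \<open>L\<^sub>1 = T\<^sub>1\<close>, and likewise \<open>L\<^sub>2 = T\<^sub>2\<close>.  So every irreducible
\<open>M \<supseteq> L\<close> contains \<open>L\<^sub>1\<close> or \<open>L\<^sub>2\<close>, and these two are incomparable since they span everything.\<close>

lemma (in module) subspace_eq_if_span_Un_eq_UNIV:
  assumes "subspace T1" "subspace T2" "subspace A"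
    and "span (T1 \<union> T2) = UNIV" "T1 \<subseteq> A" "A \<inter> T2 \<subseteq> T1"
  shows "A = T1"
proof
  show "A \<subseteq> T1"
  proof
    fix x assume "x \<in> A"
    have "span T1 = T1" "span T2 = T2"
      using assms(1,2) by (simp_all only: span_eq_iff)
    moreover have "x \<in> span (T1 \<union> T2)" using assms(4) by simp
    ultimately obtain a b where ab: "a \<in> T1" "b \<in> T2" "x = a + b"
      unfolding span_Un by blast
    have "x - a \<in> A" using subspace_diff[OF assms(3) \<open>x \<in> A\<close>] ab(1) assms(5) by blast
    then have "b \<in> A" using ab(3) by simp
    with ab assms(6) have "b \<in> T1" by blast
    with ab show "x \<in> T1" using subspace_add[OF assms(1)] by simp
  qed
qed (use assms in blast)

lemma proj_hyperplane_neq_UNIV: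
  assumes "proj_hyperplane (H :: 'n::finite cvec set)"
  shows "H \<noteq> UNIV"
proof
  assume "H = UNIV"
  then have "vec.dim H = CARD('n)" using vec_dim_card by simp
  with assms have "CARD('n) = CARD('n) - 1" unfolding proj_hyperplane_def by simp
  moreover have "CARD('n) > 0" by simp
  ultimately show False by linarith
qed

lemma subspace_Inter_hyperplanes:
  assumes "\<forall>H \<in> \<H>. proj_hyperplane (H :: 'n::finite cvec set)" "K \<subseteq> \<H>"
  shows "vec.subspace (\<Inter>K)"
  using assms by (intro vec.subspace_Inter) (auto simp: proj_hyperplane_def)

lemma Inter_hyperplanes_neq_UNIV:
  assumes "\<forall>H \<in> \<H>. proj_hyperplane (H :: 'n::finite cvec set)" "K \<subseteq> \<H>" "K \<noteq> {}"
  shows "\<Inter>K \<noteq> UNIV"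
  using assms proj_hyperplane_neq_UNIV by blast

lemma splitting_centre_not_subset:
  assumes "\<forall>H \<in> \<H>. proj_hyperplane (H :: 'n::finite cvec set)"
    and "Ki \<subseteq> \<H>" "Kj \<subseteq> \<H>" "Kj \<noteq> {}" "vec.span (\<Inter>Ki \<union> \<Inter>Kj) = UNIV"
  shows "\<not> \<Inter>Ki \<subseteq> \<Inter>Kj"
proof
  assume "\<Inter>Ki \<subseteq> \<Inter>Kj"
  then have "vec.span (\<Inter>Kj) = UNIV" using assms(5) by (simp add: Un_absorb1)
  then have "\<Inter>Kj = UNIV" using subspace_Inter_hyperplanes[OF assms(1,3)] vec.span_eq_iff by metis
  with Inter_hyperplanes_neq_UNIV[OF assms(1,3,4)] show False ..
qed

lemma Inter_hyps_containing:
  assumes "M \<in> intersections \<H>"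
  shows "\<Inter>(hyps_containing \<H> M) = M"
proof -
  obtain S where "S \<subseteq> \<H>" "S \<noteq> {}" "M = \<Inter>S"
    using assms unfolding intersections_def by blast
  then show ?thesis unfolding hyps_containing_def by blast
qed

lemma subspace_intersection:
  assumes "\<forall>H \<in> \<H>. proj_hyperplane (H :: 'n::finite cvec set)" "M \<in> intersections \<H>"
  shows "vec.subspace M"
  using subspace_Inter_hyperplanes[OF assms(1), of "hyps_containing \<H> M"]
    Inter_hyps_containing[OF assms(2)]
  by (simp add: hyps_containing_def)

lemma arr_irreducible_subset_splitting:
  assumes "arr_irreducible F" "F \<subseteq> K1 \<union> K2"
    and "vec.span (centre K1 \<union> centre K2) = (UNIV :: 'n::finite cvec set)"
  shows "F \<subseteq> K1 \<or> F \<subseteq> K2"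
proof (rule ccontr)
  assume "\<not> (F \<subseteq> K1 \<or> F \<subseteq> K2)"
  with assms(2) have nonempty: "F \<inter> K1 \<noteq> {}" "F \<inter> K2 \<noteq> {}" by blast+
  have "vec.span (centre K1 \<union> centre K2)
      \<subseteq> vec.span (centre (F \<inter> K1) \<union> centre (F \<inter> K2))"
    by (rule vec.span_mono) (auto simp: centre_def)
  with assms(3) have "vec.span (centre (F \<inter> K1) \<union> centre (F \<inter> K2)) = UNIV"
    by (metis top.extremum_uniqueI)
  with assms(2) have "is_splitting F (F \<inter> K1) (F \<inter> K2)"
    unfolding is_splitting_def by (simp add: Int_Un_distrib[symmetric] Int_absorb2)
  with nonempty assms(1) show False unfolding arr_irreducible_def by metis
qed

lemma irreducible_above_contains_centre:
  assumes "M \<in> irr_intersections \<H>" "L \<subseteq> M"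
    and "hyps_containing \<H> L = K1 \<union> K2" "vec.span (\<Inter>K1 \<union> \<Inter>K2) = UNIV"
  shows "\<Inter>K1 \<subseteq> M \<or> \<Inter>K2 \<subseteq> M"
proof -
  have "arr_irreducible (hyps_containing \<H> M)" "M \<in> intersections \<H>"
    using assms(1) unfolding irr_intersections_def by auto
  moreover have "hyps_containing \<H> M \<subseteq> K1 \<union> K2"
    using assms(2,3) unfolding hyps_containing_def by blast
  ultimately have "hyps_containing \<H> M \<subseteq> K1 \<or> hyps_containing \<H> M \<subseteq> K2"
    using assms(4) by (intro arr_irreducible_subset_splitting) (simp_all add: centre_def)
  then show ?thesis using Inter_hyps_containing[OF \<open>M \<in> intersections \<H>\<close>] by blast
qed

lemma irr_components_eq_pair:
  assumes "L1 \<in> irr_intersections \<H>" "L2 \<in> irr_intersections \<H>"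
    and "L \<subseteq> L1" "L \<subseteq> L2" "\<not> L1 \<subseteq> L2" "\<not> L2 \<subseteq> L1"
    and above: "\<And>M. M \<in> irr_intersections \<H> \<Longrightarrow> L \<subseteq> M \<Longrightarrow> L1 \<subseteq> M \<or> L2 \<subseteq> M"
  shows "irr_components \<H> L = {L1, L2}"
proof -
  have not_below: "\<not> M \<subset> L1" "\<not> M \<subset> L2"
    if "M \<in> irr_intersections \<H>" "L \<subseteq> M" for M
    using above[OF that] assms(5,6) by auto
  show ?thesis
  proof (intro set_eqI iffI)
    fix M assume "M \<in> irr_components \<H> L"
    then have M: "M \<in> irr_intersections \<H>" "L \<subseteq> M"
      and minimal: "\<And>M'. M' \<in> irr_intersections \<H> \<Longrightarrow> L \<subseteq> M' \<Longrightarrow> \<not> M' \<subset> M"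
      unfolding irr_components_def by auto
    from above[OF M] show "M \<in> {L1, L2}"
      using minimal[OF assms(1,3)] minimal[OF assms(2,4)] by auto
  next
    fix M assume "M \<in> {L1, L2}"
    then show "M \<in> irr_components \<H> L"
      using assms(1-4) not_below unfolding irr_components_def by auto
  qed
qed

lemma splitting_centres_are_components:
  fixes \<H> :: "'n::finite cvec set set"
  assumes hyp: "\<forall>H \<in> \<H>. proj_hyperplane H"
    and L1: "L1 \<in> irr_intersections \<H>" and L2: "L2 \<in> irr_intersections \<H>"
    and split: "hyps_containing \<H> (L1 \<inter> L2) = K1 \<union> K2" "vec.span (\<Inter>K1 \<union> \<Inter>K2) = UNIV"
    and "\<Inter>K1 \<subseteq> L1" "\<Inter>K2 \<subseteq> L2"
  shows "irr_components \<H> (L1 \<inter> L2) = {L1, L2} \<and> vec.span (L1 \<union> L2) = UNIV"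
proof -
  have "L1 \<in> intersections \<H>" "L2 \<in> intersections \<H>"
    using L1 L2 unfolding irr_intersections_def by auto
  then have sub: "vec.subspace L1" "vec.subspace L2" "L1 \<noteq> UNIV" "L2 \<noteq> UNIV"
    using subspace_intersection[OF hyp] unfolding intersections_def by auto
  have "K1 \<subseteq> \<H>" "K2 \<subseteq> \<H>" and L: "L1 \<inter> L2 \<subseteq> \<Inter>K1" "L1 \<inter> L2 \<subseteq> \<Inter>K2"
    using split(1) unfolding hyps_containing_def by auto
  then have T: "vec.subspace (\<Inter>K1)" "vec.subspace (\<Inter>K2)"
    using subspace_Inter_hyperplanes[OF hyp] by auto
  have "L1 \<inter> \<Inter>K2 \<subseteq> \<Inter>K1" "L2 \<inter> \<Inter>K1 \<subseteq> \<Inter>K2"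
    using L assms(6,7) by blast+
  then have "L1 = \<Inter>K1" "L2 = \<Inter>K2"
    using vec.subspace_eq_if_span_Un_eq_UNIV[OF T(1,2) sub(1) split(2) assms(6)]
      vec.subspace_eq_if_span_Un_eq_UNIV[OF T(2,1) sub(2) _ assms(7)] split(2)
    by (simp_all add: Un_commute)
  then have span: "vec.span (L1 \<union> L2) = UNIV" using split(2) by simp
  have "\<not> L1 \<subseteq> L2" "\<not> L2 \<subseteq> L1"
    using span sub vec.span_eq_iff by (metis Un_absorb1 Un_absorb2)+
  with irreducible_above_contains_centre[OF _ _ split] \<open>L1 = \<Inter>K1\<close> \<open>L2 = \<Inter>K2\<close>
  have "irr_components \<H> (L1 \<inter> L2) = {L1, L2}"
    by (intro irr_components_eq_pair[OF L1 L2]) auto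
  then show ?thesis using span ..
qed

theorem lemma2p14:
  fixes \<H> :: "'n::finite cvec set set"
    and L1 L2 :: "'n cvec set"
  assumes "finite \<H>"
    and "\<forall>H \<in> \<H>. proj_hyperplane H"
    and "L1 \<in> irr_intersections \<H>"
    and "L2 \<in> irr_intersections \<H>"
    and "L1 \<inter> L2 \<in> intersections \<H>"
    and "\<not> arr_irreducible (hyps_containing \<H> (L1 \<inter> L2))"
  shows "irr_components \<H> (L1 \<inter> L2) = {L1, L2} \<and> vec.span (L1 \<union> L2) = UNIV"
proof -
  obtain K1 K2 where K: "K1 \<noteq> {}" "K2 \<noteq> {}" "hyps_containing \<H> (L1 \<inter> L2) = K1 \<union> K2"
      "vec.span (\<Inter>K1 \<union> \<Inter>K2) = UNIV"
    using assms(6) unfolding arr_irreducible_def is_splitting_def centre_def by blast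
  have K': "hyps_containing \<H> (L1 \<inter> L2) = K2 \<union> K1" "vec.span (\<Inter>K2 \<union> \<Inter>K1) = UNIV"
    using K(3,4) by (simp_all add: Un_commute)
  have centres: "K1 \<subseteq> \<H>" "K2 \<subseteq> \<H>" "L1 \<inter> L2 \<subseteq> \<Inter>K1" "L1 \<inter> L2 \<subseteq> \<Inter>K2"
    using K(3) unfolding hyps_containing_def by auto
  have not_both: "\<not> (\<Inter>K1 \<subseteq> L1 \<and> \<Inter>K1 \<subseteq> L2)" "\<not> (\<Inter>K2 \<subseteq> L1 \<and> \<Inter>K2 \<subseteq> L2)"
    using splitting_centre_not_subset[OF assms(2) _ _ _ K(4)]
      splitting_centre_not_subset[OF assms(2) _ _ _ K'(2)] K(1,2) centres by blast+
  have above: "\<Inter>K1 \<subseteq> L1 \<or> \<Inter>K2 \<subseteq> L1" "\<Inter>K1 \<subseteq> L2 \<or> \<Inter>K2 \<subseteq> L2"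
    using irreducible_above_contains_centre[OF _ _ K(3,4)] assms(3,4) by auto
  consider "\<Inter>K1 \<subseteq> L1" "\<Inter>K2 \<subseteq> L2" | "\<Inter>K2 \<subseteq> L1" "\<Inter>K1 \<subseteq> L2"
    using above not_both by blast
  then show ?thesis
    using splitting_centres_are_components[OF assms(2-4) K(3,4)]
      splitting_centres_are_components[OF assms(2-4) K'] by cases
qed

end
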